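(* Let $(A,\leq,\cdot,/)$ be a right-residuated magma satisfying condition (N), and let $B\subseteq A$ be closed under $\sqcap$. The following are equivalent: (1) $(B,\sqcap)$ is a left normal band, i.e. an idempotent semigroup satisfying $x\sqcap y\sqcap z = x\sqcap z\sqcap y$; (2) $(B,\sqcap)$ is a semigroup (i.e. $\sqcap$ is associative on $B$); (3) $(B,\sqcap)$ satisfies, for all $x,y,z\in B$, the identities $x\sqcap(y\sqcap x)=x\sqcap y$ and $(x\sqcap(y\sqcap z))\sqcap z = x\sqcap (y\sqcap z)$.
   Context: Write $xy$ for $x\cdot y$; $\cdot$ binds more strongly than $/$, and $/$ binds more strongly than $\sqcap$, where $x\sqcap y := (x/y)y$. A right-residuated magma is a structure $(A,\leq,\cdot,/)$ where $(A,\leq)$ is a poset and $xy\leq z\iff x\leq z/y$ for all $x,y,z\in A$. Condition (N): for all $x,y\in A$, $x\leq y\iff x = y\sqcap x$. *)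

theory Defs
  imports Main
begin

definition right_residuated_magma ::
  "('a \<Rightarrow> 'a \<Rightarrow> bool) \<Rightarrow> ('a \<Rightarrow> 'a \<Rightarrow> 'a) \<Rightarrow> ('a \<Rightarrow> 'a \<Rightarrow> 'a) \<Rightarrow> bool" where
  "right_residuated_magma le mult rdiv \<longleftrightarrow>
     (\<forall>x. le x x) \<and>
     (\<forall>x y. le x y \<and> le y x \<longrightarrow> x = y) \<and>
     (\<forall>x y z. le x y \<and> le y z \<longrightarrow> le x z) \<and>
     (\<forall>x y z. le (mult x y) z \<longleftrightarrow> le x (rdiv z y))"

definition rmeet :: "('a \<Rightarrow> 'a \<Rightarrow> 'a) \<Rightarrow> ('a \<Rightarrow> 'a \<Rightarrow> 'a) \<Rightarrow> 'a \<Rightarrow> 'a \<Rightarrow> 'a" where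
  "rmeet mult rdiv x y = mult (rdiv x y) y"

definition condN ::
  "('a \<Rightarrow> 'a \<Rightarrow> bool) \<Rightarrow> ('a \<Rightarrow> 'a \<Rightarrow> 'a) \<Rightarrow> ('a \<Rightarrow> 'a \<Rightarrow> 'a) \<Rightarrow> bool" where
  "condN le mult rdiv \<longleftrightarrow> (\<forall>x y. le x y \<longleftrightarrow> x = rmeet mult rdiv y x)"

definition left_normal_band_on :: "'a set \<Rightarrow> ('a \<Rightarrow> 'a \<Rightarrow> 'a) \<Rightarrow> bool" where
  "left_normal_band_on B m \<longleftrightarrow>
     (\<forall>x\<in>B. \<forall>y\<in>B. \<forall>z\<in>B. m (m x y) z = m x (m y z)) \<and>
     (\<forall>x\<in>B. m x x = x) \<and>
     (\<forall>x\<in>B. \<forall>y\<in>B. \<forall>z\<in>B. m (m x y) z = m (m x z) y)"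

definition semigroup_on :: "'a set \<Rightarrow> ('a \<Rightarrow> 'a \<Rightarrow> 'a) \<Rightarrow> bool" where
  "semigroup_on B m \<longleftrightarrow> (\<forall>x\<in>B. \<forall>y\<in>B. \<forall>z\<in>B. m (m x y) z = m x (m y z))"

end

theory Submission
  imports Defs
begin

text \<open>
  Under (N), \<open>x \<sqsubseteq> y\<close> means \<open>x = y \<sqinter> x\<close>, and residuation makes \<open>\<sqinter>\<close> monotone in its left argument
  with \<open>x \<sqinter> y \<sqsubseteq> x\<close>. With these order facts the two identities of (3) give \<open>u \<sqinter> (v \<sqinter> w) = u \<sqinter> w\<close> for \<open>u \<sqsubseteq> v\<close>, from which left normality follows,
  and left normality together with (3) yields associativity by a short equational calculation.
  Conversely, associativity makes \<open>x \<sqinter> y\<close> absorb \<open>x\<close> on the right, which gives (3), and idempotence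
  holds everywhere by (N).
\<close>

locale right_residuated_magma_N =
  fixes le :: "'a \<Rightarrow> 'a \<Rightarrow> bool" (infix "\<sqsubseteq>" 50)
    and mult :: "'a \<Rightarrow> 'a \<Rightarrow> 'a" and rdiv :: "'a \<Rightarrow> 'a \<Rightarrow> 'a"
  assumes magma: "right_residuated_magma le mult rdiv"
    and condN: "condN le mult rdiv"
begin

abbreviation meet :: "'a \<Rightarrow> 'a \<Rightarrow> 'a" (infixl "\<sqinter>" 70)
  where "x \<sqinter> y \<equiv> rmeet mult rdiv x y"

lemma le_refl: "x \<sqsubseteq> x"
  and le_antisym: "x \<sqsubseteq> y \<Longrightarrow> y \<sqsubseteq> x \<Longrightarrow> x = y"
  and le_trans: "x \<sqsubseteq> y \<Longrightarrow> y \<sqsubseteq> z \<Longrightarrow> x \<sqsubseteq> z"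
  and residuation: "mult x y \<sqsubseteq> z \<longleftrightarrow> x \<sqsubseteq> rdiv z y"
  using magma unfolding right_residuated_magma_def by blast+

lemma le_iff_meet: "x \<sqsubseteq> y \<longleftrightarrow> x = y \<sqinter> x"
  using condN unfolding condN_def by blast

lemma mult_mono_left: "x \<sqsubseteq> y \<Longrightarrow> mult x z \<sqsubseteq> mult y z"
  by (meson le_refl le_trans residuation)

lemma rdiv_mono_left: "x \<sqsubseteq> y \<Longrightarrow> rdiv x z \<sqsubseteq> rdiv y z"
  by (meson le_refl le_trans residuation)

lemma meet_le_left: "x \<sqinter> y \<sqsubseteq> x"
  unfolding rmeet_def using le_refl residuation by blast

lemma meet_idem: "x \<sqinter> x = x"
  using le_iff_meet le_refl by metis

lemma meet_left_absorb: "x \<sqinter> (x \<sqinter> y) = x \<sqinter> y"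
  using le_iff_meet meet_le_left by metis

lemma meet_right_idem: "x \<sqinter> y \<sqinter> y = x \<sqinter> y"
proof (rule le_antisym)
  show "x \<sqinter> y \<sqinter> y \<sqsubseteq> x \<sqinter> y"
    by (rule meet_le_left)
  have "rdiv x y \<sqsubseteq> rdiv (x \<sqinter> y) y"
    unfolding rmeet_def using le_refl residuation by blast
  then show "x \<sqinter> y \<sqsubseteq> x \<sqinter> y \<sqinter> y"
    unfolding rmeet_def by (rule mult_mono_left)
qed

lemma meet_mono: "x \<sqsubseteq> y \<Longrightarrow> x \<sqinter> z \<sqsubseteq> y \<sqinter> z"
  unfolding rmeet_def by (intro mult_mono_left rdiv_mono_left)

text \<open>An element fixed by \<open>- \<sqinter> c\<close> has the form \<open>(u/c)c\<close>, so it stays below \<open>(z/c)c\<close> for every \<open>z \<sqsupseteq> u\<close>.\<close>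
lemma le_meetI:
  assumes "u \<sqinter> c = u" and "u \<sqsubseteq> z"
  shows "u \<sqsubseteq> z \<sqinter> c"
proof -
  have "mult (rdiv u c) c \<sqsubseteq> mult (rdiv z c) c"
    using assms(2) by (intro mult_mono_left rdiv_mono_left)
  then show ?thesis
    using assms(1) unfolding rmeet_def by simp
qed

context
  fixes B :: "'a set"
  assumes meet_closed: "\<And>x y. x \<in> B \<Longrightarrow> y \<in> B \<Longrightarrow> x \<sqinter> y \<in> B"
begin

context
  assumes regular: "\<And>x y. x \<in> B \<Longrightarrow> y \<in> B \<Longrightarrow> x \<sqinter> (y \<sqinter> x) = x \<sqinter> y"
    and absorb_right: "\<And>x y z. x \<in> B \<Longrightarrow> y \<in> B \<Longrightarrow> z \<in> B \<Longrightarrow> x \<sqinter> (y \<sqinter> z) \<sqinter> z = x \<sqinter> (y \<sqinter> z)"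
begin

lemma meet_eq_left_if_le:
  assumes "u \<in> B" "c \<in> B" "u \<sqsubseteq> c"
  shows "u \<sqinter> c = u"
proof -
  have "u \<sqinter> c = u \<sqinter> (c \<sqinter> u)"
    using regular assms(1,2) by simp
  also have "\<dots> = u"
    using assms(3) le_iff_meet meet_idem by metis
  finally show ?thesis .
qed

lemma meet_cancel_if_le:
  assumes "u \<in> B" "v \<in> B" "w \<in> B" "u \<sqsubseteq> v"
  shows "u \<sqinter> (v \<sqinter> w) = u \<sqinter> w"
proof (rule le_antisym)
  show "u \<sqinter> (v \<sqinter> w) \<sqsubseteq> u \<sqinter> w"
    using absorb_right assms(1-3) meet_le_left by (intro le_meetI)
  have "u \<sqinter> w \<sqinter> (v \<sqinter> w) = u \<sqinter> w"
    using assms meet_closed meet_mono by (intro meet_eq_left_if_le)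
  then show "u \<sqinter> w \<sqsubseteq> u \<sqinter> (v \<sqinter> w)"
    using meet_le_left by (intro le_meetI)
qed

lemma meet_left_normal:
  assumes "x \<in> B" "y \<in> B" "z \<in> B"
  shows "x \<sqinter> y \<sqinter> z = x \<sqinter> z \<sqinter> y"
proof -
  have xy: "x \<sqinter> y \<in> B" and xz: "x \<sqinter> z \<in> B"
    using assms meet_closed by auto
  have "x \<sqinter> y \<sqinter> z = x \<sqinter> z \<sqinter> (x \<sqinter> y \<sqinter> z)"
    using le_iff_meet meet_mono meet_le_left by blast
  also have "\<dots> = x \<sqinter> z \<sqinter> (x \<sqinter> y \<sqinter> (x \<sqinter> z))"
    using meet_cancel_if_le[OF xy assms(1,3)] meet_le_left by simp
  also have "\<dots> = x \<sqinter> z \<sqinter> (x \<sqinter> y)"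
    using regular xy xz by simp
  also have "\<dots> = x \<sqinter> z \<sqinter> y"
    using meet_cancel_if_le[OF xz assms(1,2)] meet_le_left by simp
  finally show ?thesis .
qed

lemma meet_distrib_right:
  assumes "x \<in> B" "y \<in> B" "z \<in> B"
  shows "x \<sqinter> (y \<sqinter> z) = x \<sqinter> z \<sqinter> (y \<sqinter> z)"
  using absorb_right meet_left_normal assms meet_closed by metis

lemma meet_assoc:
  assumes "x \<in> B" "y \<in> B" "z \<in> B"
  shows "x \<sqinter> (y \<sqinter> z) = x \<sqinter> y \<sqinter> z"
proof -
  have xz: "x \<sqinter> z \<in> B" and yz: "y \<sqinter> z \<in> B"
    using assms meet_closed by auto
  have "x \<sqinter> (y \<sqinter> z) = x \<sqinter> z \<sqinter> (y \<sqinter> z)"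
    using assms by (rule meet_distrib_right)
  also have "\<dots> = x \<sqinter> z \<sqinter> (y \<sqinter> z \<sqinter> (x \<sqinter> z))"
    using regular xz yz by simp
  also have "\<dots> = x \<sqinter> z \<sqinter> (y \<sqinter> (x \<sqinter> z))"
    using meet_distrib_right assms(1-3) by simp
  also have "\<dots> = x \<sqinter> z \<sqinter> y"
    using regular xz assms(2) by simp
  also have "\<dots> = x \<sqinter> y \<sqinter> z"
    using meet_left_normal assms by simp
  finally show ?thesis .
qed

end

context
  assumes assoc: "\<And>x y z. x \<in> B \<Longrightarrow> y \<in> B \<Longrightarrow> z \<in> B \<Longrightarrow> x \<sqinter> y \<sqinter> z = x \<sqinter> (y \<sqinter> z)"
begin

lemma meet_regular_if_assoc:
  assumes "x \<in> B" "y \<in> B"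
  shows "x \<sqinter> (y \<sqinter> x) = x \<sqinter> y"
proof -
  have xy: "x \<sqinter> y \<in> B"
    using assms meet_closed by auto
  have "x \<sqinter> y \<sqinter> x \<sqinter> (x \<sqinter> y) = x \<sqinter> y"
    using assoc[OF xy assms(1) xy] meet_left_absorb meet_idem by simp
  then have "x \<sqinter> y \<sqsubseteq> x \<sqinter> y \<sqinter> x"
    using le_iff_meet by simp
  then have "x \<sqinter> y \<sqinter> x = x \<sqinter> y"
    using meet_le_left le_antisym by blast
  then show ?thesis
    using assoc assms by simp
qed

lemma meet_absorb_right_if_assoc:
  assumes "x \<in> B" "y \<in> B" "z \<in> B"
  shows "x \<sqinter> (y \<sqinter> z) \<sqinter> z = x \<sqinter> (y \<sqinter> z)"
  using assoc assms meet_closed meet_right_idem by metis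

end

end

end


theorem mainTheorem3:
  fixes le :: "'a \<Rightarrow> 'a \<Rightarrow> bool" and mult rdiv :: "'a \<Rightarrow> 'a \<Rightarrow> 'a" and B :: "'a set"
  assumes "right_residuated_magma le mult rdiv"
    and "condN le mult rdiv"
    and "\<forall>x\<in>B. \<forall>y\<in>B. rmeet mult rdiv x y \<in> B"
  shows "(left_normal_band_on B (rmeet mult rdiv) \<longleftrightarrow> semigroup_on B (rmeet mult rdiv))
       \<and> (semigroup_on B (rmeet mult rdiv) \<longleftrightarrow>
          (\<forall>x\<in>B. \<forall>y\<in>B. \<forall>z\<in>B.
             rmeet mult rdiv x (rmeet mult rdiv y x) = rmeet mult rdiv x y \<and>
             rmeet mult rdiv (rmeet mult rdiv x (rmeet mult rdiv y z)) z
               = rmeet mult rdiv x (rmeet mult rdiv y z)))"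
proof -
  interpret right_residuated_magma_N le mult rdiv
    using assms(1,2) by unfold_locales
  have closed: "\<And>x y. x \<in> B \<Longrightarrow> y \<in> B \<Longrightarrow> x \<sqinter> y \<in> B"
    using assms(3) by blast
  let ?identities = "\<forall>x\<in>B. \<forall>y\<in>B. \<forall>z\<in>B.
    x \<sqinter> (y \<sqinter> x) = x \<sqinter> y \<and> x \<sqinter> (y \<sqinter> z) \<sqinter> z = x \<sqinter> (y \<sqinter> z)"
  have identities_if_semigroup: ?identities if "semigroup_on B (\<sqinter>)"
  proof -
    have assoc: "\<And>x y z. x \<in> B \<Longrightarrow> y \<in> B \<Longrightarrow> z \<in> B \<Longrightarrow> x \<sqinter> y \<sqinter> z = x \<sqinter> (y \<sqinter> z)"
      using that unfolding semigroup_on_def by blast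
    show ?thesis
      using meet_regular_if_assoc[OF closed assoc] meet_absorb_right_if_assoc[OF closed assoc]
      by blast
  qed
  have left_normal_if_identities: "left_normal_band_on B (\<sqinter>)" if ?identities
  proof -
    have regular: "\<And>x y. x \<in> B \<Longrightarrow> y \<in> B \<Longrightarrow> x \<sqinter> (y \<sqinter> x) = x \<sqinter> y"
      and absorb: "\<And>x y z. x \<in> B \<Longrightarrow> y \<in> B \<Longrightarrow> z \<in> B \<Longrightarrow> x \<sqinter> (y \<sqinter> z) \<sqinter> z = x \<sqinter> (y \<sqinter> z)"
      using that by blast+
    show ?thesis
      unfolding left_normal_band_on_def
      using meet_assoc[OF closed regular absorb] meet_left_normal[OF closed regular absorb] meet_idem
      by simp
  qed
  show ?thesis
    using identities_if_semigroup left_normal_if_identities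
    unfolding left_normal_band_on_def semigroup_on_def by blast
qed

end
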